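(* Let $n\ge1$, let $a_0,a_1,\dots,a_n>0$, and for $1\le k\le n$ let $\psi_k$ be an even probability density function on $\mathbb{R}$ vanishing outside $[-1,1]$ whose (essential) support is exactly $[-1,1]$, with characteristic function $\varphi_k(z)=\int_{-1}^{1}\psi_k(x)\cos(zx)\,dx$. Consider the improper integral \[ I=\lim_{R\to\infty}\int_0^R\operatorname{sinc}(a_0z)\prod_{k=1}^{n}\varphi_k(a_kz)\,dz . \] If $a_0>a_1+\cdots+a_n$, then $I=\dfrac{\pi}{2a_0}$, whereas if $a_0<a_1+\cdots+a_n$, then $I<\dfrac{\pi}{2a_0}$.
   Context: $\operatorname{sinc}(x)=\sin(x)/x$ for $x\neq0$ and $\operatorname{sinc}(0)=1$. Example: for $\nu\ge-\tfrac12$, the normalized Bessel function $2^{\nu}\Gamma(\nu+1)J_\nu(z)/z^\nu$ is the characteristic function of the symmetric beta density $\frac{\Gamma(\nu+1)}{\sqrt\pi\,\Gamma(\nu+\frac12)}(1-x^2)^{\nu-\frac12}\mathbf 1_{[-1,1]}(x)$; with $\nu=0$ this gives $J_0$. *)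

theory Defs
  imports "HOL-Analysis.Analysis"
begin

definition sinc :: "real \<Rightarrow> real" where
  "sinc x = (if x = 0 then 1 else sin x / x)"

definition prob_density :: "(real \<Rightarrow> real) \<Rightarrow> bool" where
  "prob_density f \<longleftrightarrow> f \<in> borel_measurable lborel \<and> (\<forall>x. 0 \<le> f x)
     \<and> integrable lborel f \<and> integral\<^sup>L lborel f = 1"

text \<open>Even, vanishing (almost everywhere) outside [-1,1], with essential support
  exactly [-1,1]: every point of [-1,1] has every neighbourhood on which f is not a.e. zero.\<close>
definition admissible_density :: "(real \<Rightarrow> real) \<Rightarrow> bool" where
  "admissible_density f \<longleftrightarrow> prob_density f \<and> (\<forall>x. f (-x) = f x)
     \<and> (AE x in lborel. \<bar>x\<bar> > 1 \<longrightarrow> f x = 0)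
     \<and> (\<forall>x\<in>{-1..1}. \<forall>e>0. emeasure lborel {y \<in> ball x e. f y \<noteq> 0} > 0)"

definition charfun_dens :: "(real \<Rightarrow> real) \<Rightarrow> real \<Rightarrow> real" where
  "charfun_dens f z = (LBINT x=-1..1. f x * cos (z * x))"

definition partial_int :: "real \<Rightarrow> (nat \<Rightarrow> real) \<Rightarrow> (nat \<Rightarrow> real \<Rightarrow> real) \<Rightarrow> nat \<Rightarrow> real \<Rightarrow> real" where
  "partial_int a0 a \<psi> n R =
     (LBINT z=0..R. sinc (a0 * z) * (\<Prod>k\<in>{1..n}. charfun_dens (\<psi> k) (a k * z)))"

end

theory Submission
  imports Defs "HOL-Probability.Sinc_Integral"
begin

text \<open>
  Let \<open>\<mu>\<close> be the law of \<open>a\<^sub>1X\<^sub>1 + \<dots> + a\<^sub>nX\<^sub>n\<close> for independent \<open>X\<^sub>k\<close> with densities \<open>\<psi>\<^sub>k\<close>.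
  Since the \<open>\<psi>\<^sub>k\<close> are even, \<open>\<Prod>\<^sub>k \<phi>\<^sub>k(a\<^sub>kz) = \<integral> cos(zs) d\<mu>(s)\<close>, and by Fubini the
  truncated integral becomes \<open>\<integral> (\<integral>\<^sub>0\<^sup>R sinc(a\<^sub>0z) cos(zs) dz) d\<mu>(s)\<close>. The inner integral is a
  combination of sine integrals, hence uniformly bounded, and tends to \<open>\<pi>/(2a\<^sub>0)\<close>,
  \<open>\<pi>/(4a\<^sub>0)\<close> or \<open>0\<close> according as \<open>|s| < a\<^sub>0\<close>, \<open>|s| = a\<^sub>0\<close> or \<open>|s| > a\<^sub>0\<close>; dominated
  convergence gives the limit as a \<open>\<mu>\<close>-integral of this step function. Now \<open>\<mu>\<close> is carried by
  \<open>[-\<Sigma>a\<^sub>k, \<Sigma>a\<^sub>k]\<close>, giving \<open>\<pi>/(2a\<^sub>0)\<close> when \<open>a\<^sub>0 > \<Sigma>a\<^sub>k\<close>, and, because every \<open>\<psi>\<^sub>k\<close> has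
  support reaching \<open>1\<close>, \<open>\<mu>\<close> charges \<open>(a\<^sub>0, \<infinity>)\<close> when \<open>a\<^sub>0 < \<Sigma>a\<^sub>k\<close>, where the step function
  vanishes; this makes the limit strictly smaller.
\<close>

lemma lborel_integral_odd:
  fixes g :: "real \<Rightarrow> real"
  assumes "\<And>x. g (- x) = - g x"
  shows "integral\<^sup>L lborel g = 0"
proof -
  have "integral\<^sup>L lborel g = \<bar>-1\<bar> *\<^sub>R (\<integral>x. g (0 + -1 * x) \<partial>lborel)"
    by (rule lborel_integral_real_affine) simp
  also have "\<dots> = - integral\<^sup>L lborel g"
    using assms by simp
  finally show ?thesis by simp
qed

lemma prob_space_density_prob_density:
  assumes "prob_density f"
  shows "prob_space (density lborel f)"
proof (rule prob_spaceI)
  have [measurable]: "f \<in> borel_measurable borel" and "integrable lborel f" "\<And>x. 0 \<le> f x"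
    and "integral\<^sup>L lborel f = 1"
    using assms by (auto simp: prob_density_def)
  then have "(\<integral>\<^sup>+ x. ennreal (f x) \<partial>lborel) = 1"
    by (subst nn_integral_eq_integral) auto
  then show "emeasure (density lborel f) (space (density lborel f)) = 1"
    by (simp add: emeasure_density)
qed

lemma charfun_dens_eq_integral_density:
  assumes "admissible_density f"
  shows "charfun_dens f t = (\<integral>x. cos (t * x) \<partial>density lborel f)"
proof -
  have [measurable]: "f \<in> borel_measurable borel" and "\<And>x. 0 \<le> f x"
    and vanish: "AE x in lborel. \<bar>x\<bar> > 1 \<longrightarrow> f x = 0"
    using assms by (auto simp: admissible_density_def prob_density_def)
  have "charfun_dens f t = (LBINT x : {-1..1}. f x * cos (t * x))"
    unfolding charfun_dens_def
    by (subst interval_integral_Icc[symmetric]) (auto simp: one_ereal_def)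
  also have "\<dots> = (\<integral>x. f x * cos (t * x) \<partial>lborel)"
    unfolding set_lebesgue_integral_def
    by (rule integral_cong_AE) (use vanish in \<open>auto split: split_indicator\<close>)
  also have "\<dots> = (\<integral>x. cos (t * x) \<partial>density lborel f)"
    by (subst integral_density) (auto simp: \<open>\<And>x. 0 \<le> f x\<close>)
  finally show ?thesis .
qed

lemma integral_density_sin_even:
  fixes f :: "real \<Rightarrow> real"
  assumes [measurable]: "f \<in> borel_measurable borel"
    and "\<And>x. 0 \<le> f x" "\<And>x. f (- x) = f x"
  shows "(\<integral>x. sin (t * x) \<partial>density lborel f) = 0"
proof -
  have "(\<integral>x. sin (t * x) \<partial>density lborel f) = (\<integral>x. f x * sin (t * x) \<partial>lborel)"
    by (subst integral_density) (auto simp: assms(2))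
  also have "\<dots> = 0"
    by (rule lborel_integral_odd) (simp add: assms(3))
  finally show ?thesis .
qed

lemma AE_density_abs_le_1:
  assumes "admissible_density f"
  shows "AE x in density lborel f. \<bar>x\<bar> \<le> 1"
proof -
  have [measurable]: "f \<in> borel_measurable borel"
    and "AE x in lborel. \<bar>x\<bar> > 1 \<longrightarrow> f x = 0"
    using assms by (auto simp: admissible_density_def prob_density_def)
  then show ?thesis
    by (subst AE_density) auto
qed

lemma emeasure_density_greaterThan_pos:
  assumes "admissible_density f" "c < 1"
  shows "emeasure (density lborel f) {c<..} > 0"
proof (rule ccontr)
  have [measurable]: "f \<in> borel_measurable borel" and nonneg: "\<And>x. 0 \<le> f x"
    and supp: "emeasure lborel {y \<in> ball 1 (1 - c). f y \<noteq> 0} > 0"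
    using assms by (auto simp: admissible_density_def prob_density_def)
  assume "\<not> ?thesis"
  then have "(\<integral>\<^sup>+ x. ennreal (f x) * indicator {c<..} x \<partial>lborel) = 0"
    by (simp add: emeasure_density zero_less_iff_neq_zero)
  then have "AE x in lborel. ennreal (f x) * indicator {c<..} x = 0"
    by (subst (asm) nn_integral_0_iff_AE) auto
  then have "AE x in lborel. \<not> (x \<in> ball 1 (1 - c) \<and> f x \<noteq> 0)"
    by (rule AE_mp) (use nonneg in \<open>auto simp: dist_real_def split: split_indicator\<close>)
  then have "{y \<in> ball 1 (1 - c). f y \<noteq> 0} \<in> null_sets lborel"
    by (subst (asm) AE_iff_null) auto
  with supp show False by auto
qed

section \<open>Laws of weighted sums of independent variables\<close>

definition add_scaled :: "real measure \<Rightarrow> real \<Rightarrow> real measure \<Rightarrow> real measure" where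
  "add_scaled M b D = distr (M \<Otimes>\<^sub>M D) borel (\<lambda>(x, y). x + b * y)"

lemma sets_add_scaled [measurable_cong, simp]: "sets (add_scaled M b D) = sets borel"
  by (simp add: add_scaled_def)

locale pair_real_prob_space = M: prob_space M + D: prob_space D
  for M D :: "real measure" +
  assumes sets_M [measurable_cong]: "sets M = sets borel"
    and sets_D [measurable_cong]: "sets D = sets borel"
begin

sublocale P: pair_prob_space M D ..

lemma measurable_add_scaled [measurable]: "(\<lambda>(x, y). x + b * y) \<in> measurable (M \<Otimes>\<^sub>M D) borel"
  by measurable

lemma prob_space_add_scaled: "prob_space (add_scaled M b D)"
  unfolding add_scaled_def by (rule P.prob_space_distr) measurable

lemma integral_cos_add_scaled:
  assumes "\<And>t. (\<integral>y. sin (t * y) \<partial>D) = 0"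
  shows "(\<integral>s. cos (z * s) \<partial>add_scaled M b D) = (\<integral>x. cos (z * x) \<partial>M) * (\<integral>y. cos (b * z * y) \<partial>D)"
proof -
  have inner: "(\<integral>y. cos (z * (x + b * y)) \<partial>D) = cos (z * x) * (\<integral>y. cos (b * z * y) \<partial>D)" for x
  proof -
    have "(\<integral>y. cos (z * (x + b * y)) \<partial>D)
        = (\<integral>y. cos (z * x) * cos (b * z * y) - sin (z * x) * sin (b * z * y) \<partial>D)"
      by (simp add: distrib_left cos_add ac_simps)
    also have "\<dots> = cos (z * x) * (\<integral>y. cos (b * z * y) \<partial>D) - sin (z * x) * (\<integral>y. sin (b * z * y) \<partial>D)"
      by (subst Bochner_Integration.integral_diff) (auto intro!: D.integrable_const_bound[where B=1])
    finally show ?thesis by (simp add: assms)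
  qed
  have "(\<integral>s. cos (z * s) \<partial>add_scaled M b D) = (\<integral>p. cos (z * (fst p + b * snd p)) \<partial>(M \<Otimes>\<^sub>M D))"
    by (simp add: add_scaled_def integral_distr case_prod_beta')
  also have "\<dots> = (\<integral>x. (\<integral>y. cos (z * (x + b * y)) \<partial>D) \<partial>M)"
    by (rule P.integral_fst'[symmetric, where f="\<lambda>p. cos (z * (fst p + b * snd p))", simplified])
       (rule P.integrable_const_bound[where B=1], auto)
  also have "\<dots> = (\<integral>x. cos (z * x) \<partial>M) * (\<integral>y. cos (b * z * y) \<partial>D)"
    by (simp add: inner)
  finally show ?thesis .
qed

lemma AE_abs_le_add_scaled:
  assumes "AE x in M. \<bar>x\<bar> \<le> S" "AE y in D. \<bar>y\<bar> \<le> T" "0 \<le> b"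
  shows "AE s in add_scaled M b D. \<bar>s\<bar> \<le> S + b * T"
proof -
  have "AE p in M \<Otimes>\<^sub>M D. \<bar>fst p + b * snd p\<bar> \<le> S + b * T"
  proof (rule P.AE_pair_measure)
    show "AE x in M. AE y in D. \<bar>fst (x, y) + b * snd (x, y)\<bar> \<le> S + b * T"
      using assms(1)
    proof eventually_elim
      case (elim x)
      show ?case
        using assms(2)
      proof eventually_elim
        case (elim y)
        have "\<bar>x + b * y\<bar> \<le> \<bar>x\<bar> + b * \<bar>y\<bar>"
          using abs_triangle_ineq[of x "b * y"] \<open>0 \<le> b\<close> by (simp add: abs_mult)
        also have "\<dots> \<le> S + b * T"
          using elim \<open>\<bar>x\<bar> \<le> S\<close> \<open>0 \<le> b\<close> by (intro add_mono mult_left_mono)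
        finally show ?case by simp
      qed
    qed
  qed measurable
  then show ?thesis
    unfolding add_scaled_def by (subst AE_distr_iff) (auto simp: case_prod_beta')
qed

lemma emeasure_add_scaled_greaterThan_pos:
  assumes M_pos: "\<And>c. c < S \<Longrightarrow> emeasure M {c<..} > 0"
    and D_pos: "\<And>c. c < T \<Longrightarrow> emeasure D {c<..} > 0"
    and "0 < b" "c < S + b * T"
  shows "emeasure (add_scaled M b D) {c<..} > 0"
proof -
  define d where "d = S + b * T - c"
  have "d > 0" using assms(4) by (simp add: d_def)
  let ?A = "{S - d / 2<..}" and ?B = "{T - d / (2 * b)<..}"
  have "0 < emeasure M ?A * emeasure D ?B"
    using M_pos[of "S - d / 2"] D_pos[of "T - d / (2 * b)"] \<open>d > 0\<close> \<open>0 < b\<close>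
    by (simp add: ennreal_zero_less_mult_iff)
  also have "\<dots> = emeasure (M \<Otimes>\<^sub>M D) (?A \<times> ?B)"
    by (rule D.emeasure_pair_measure_Times[symmetric]) auto
  also have "\<dots> \<le> emeasure (M \<Otimes>\<^sub>M D) ((\<lambda>(x, y). x + b * y) -` {c<..} \<inter> space (M \<Otimes>\<^sub>M D))"
  proof (rule emeasure_mono)
    have "c < x + b * y" if "x \<in> ?A" "y \<in> ?B" for x y
    proof -
      have "b * (T - d / (2 * b)) < b * y"
        using that \<open>0 < b\<close> by simp
      moreover have "b * (T - d / (2 * b)) = b * T - d / 2"
        using \<open>0 < b\<close> by (simp add: field_simps)
      ultimately have "S - d / 2 + (b * T - d / 2) < x + b * y"
        using that by simp
      then show ?thesis by (simp add: d_def)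
    qed
    then show "?A \<times> ?B \<subseteq> (\<lambda>(x, y). x + b * y) -` {c<..} \<inter> space (M \<Otimes>\<^sub>M D)"
      by (auto simp: space_pair_measure sets_eq_imp_space_eq[OF sets_M] sets_eq_imp_space_eq[OF sets_D])
  qed measurable
  also have "\<dots> = emeasure (add_scaled M b D) {c<..}"
    by (simp add: add_scaled_def emeasure_distr)
  finally show ?thesis .
qed

end

fun weighted_sum_law :: "(nat \<Rightarrow> real) \<Rightarrow> (nat \<Rightarrow> real \<Rightarrow> real) \<Rightarrow> nat \<Rightarrow> real measure" where
  "weighted_sum_law a \<psi> 0 = return borel 0"
| "weighted_sum_law a \<psi> (Suc m) =
     add_scaled (weighted_sum_law a \<psi> m) (a (Suc m)) (density lborel (\<psi> (Suc m)))"

lemma sets_weighted_sum_law [measurable_cong, simp]: "sets (weighted_sum_law a \<psi> m) = sets borel"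
  by (cases m) auto

lemma pair_real_prob_space_weighted_sum_law:
  assumes "prob_space (weighted_sum_law a \<psi> m)" "prob_density (\<psi> (Suc m))"
  shows "pair_real_prob_space (weighted_sum_law a \<psi> m) (density lborel (\<psi> (Suc m)))"
  using assms prob_space_density_prob_density
  by (auto simp: pair_real_prob_space_def pair_real_prob_space_axioms_def)

lemma prob_space_weighted_sum_law:
  assumes "\<forall>k\<in>{1..m}. prob_density (\<psi> k)"
  shows "prob_space (weighted_sum_law a \<psi> m)"
  using assms
proof (induction m)
  case 0
  show ?case by (simp add: prob_space_return)
next
  case (Suc m)
  then show ?case
    using pair_real_prob_space.prob_space_add_scaled[OF pair_real_prob_space_weighted_sum_law] by simp
qed

lemma prod_charfun_dens_eq_integral_cos:
  assumes "\<forall>k\<in>{1..m}. admissible_density (\<psi> k)"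
  shows "(\<Prod>k\<in>{1..m}. charfun_dens (\<psi> k) (a k * z)) = (\<integral>s. cos (z * s) \<partial>weighted_sum_law a \<psi> m)"
  using assms
proof (induction m)
  case 0
  show ?case by (simp add: integral_return)
next
  case (Suc m)
  then have adm: "admissible_density (\<psi> (Suc m))"
    and IH: "(\<Prod>k\<in>{1..m}. charfun_dens (\<psi> k) (a k * z)) = (\<integral>s. cos (z * s) \<partial>weighted_sum_law a \<psi> m)"
    by auto
  have "pair_real_prob_space (weighted_sum_law a \<psi> m) (density lborel (\<psi> (Suc m)))"
    using Suc.prems
    by (intro pair_real_prob_space_weighted_sum_law prob_space_weighted_sum_law) (auto simp: admissible_density_def)
  moreover have "\<And>t. (\<integral>y. sin (t * y) \<partial>density lborel (\<psi> (Suc m))) = 0"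
    using adm by (intro integral_density_sin_even) (auto simp: admissible_density_def prob_density_def)
  ultimately have "(\<integral>s. cos (z * s) \<partial>weighted_sum_law a \<psi> (Suc m))
      = (\<integral>s. cos (z * s) \<partial>weighted_sum_law a \<psi> m) * charfun_dens (\<psi> (Suc m)) (a (Suc m) * z)"
    by (simp add: pair_real_prob_space.integral_cos_add_scaled charfun_dens_eq_integral_density[OF adm])
  then show ?case
    using IH by simp
qed

lemma AE_abs_le_weighted_sum_law:
  assumes "\<forall>k\<in>{1..m}. admissible_density (\<psi> k)" "\<forall>k\<in>{1..m}. 0 < a k"
  shows "AE s in weighted_sum_law a \<psi> m. \<bar>s\<bar> \<le> (\<Sum>k\<in>{1..m}. a k)"
  using assms
proof (induction m)
  case 0
  have "AE s in return borel (0::real). s = 0"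
    by (subst AE_return) auto
  then show ?case by (simp only: weighted_sum_law.simps) simp
next
  case (Suc m)
  then have adm: "admissible_density (\<psi> (Suc m))" by auto
  have "pair_real_prob_space (weighted_sum_law a \<psi> m) (density lborel (\<psi> (Suc m)))"
    using Suc.prems
    by (intro pair_real_prob_space_weighted_sum_law prob_space_weighted_sum_law) (auto simp: admissible_density_def)
  moreover have "0 \<le> a (Suc m)"
    using Suc.prems by (simp add: less_imp_le)
  ultimately have "AE s in weighted_sum_law a \<psi> (Suc m). \<bar>s\<bar> \<le> (\<Sum>k\<in>{1..m}. a k) + a (Suc m) * 1"
    unfolding weighted_sum_law.simps
    using Suc by (intro pair_real_prob_space.AE_abs_le_add_scaled AE_density_abs_le_1[OF adm]) auto
  then show ?case
    by (simp add: add.commute)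
qed

lemma emeasure_weighted_sum_law_greaterThan_pos:
  assumes "\<forall>k\<in>{1..m}. admissible_density (\<psi> k)" "\<forall>k\<in>{1..m}. 0 < a k"
    and "c < (\<Sum>k\<in>{1..m}. a k)"
  shows "emeasure (weighted_sum_law a \<psi> m) {c<..} > 0"
  using assms
proof (induction m arbitrary: c)
  case 0
  then show ?case by simp
next
  case (Suc m)
  then have adm: "admissible_density (\<psi> (Suc m))" by auto
  have "pair_real_prob_space (weighted_sum_law a \<psi> m) (density lborel (\<psi> (Suc m)))"
    using Suc.prems
    by (intro pair_real_prob_space_weighted_sum_law prob_space_weighted_sum_law) (auto simp: admissible_density_def)
  from pair_real_prob_space.emeasure_add_scaled_greaterThan_pos[OF this, where S="\<Sum>k\<in>{1..m}. a k" and T=1]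
  show ?case
    using Suc.prems Suc.IH emeasure_density_greaterThan_pos[OF adm] by (simp add: add.commute)
qed

section \<open>The truncated sinc-cosine integral\<close>

lemma abs_sinc_le_1: "\<bar>Defs.sinc x\<bar> \<le> 1"
  unfolding Defs.sinc_def using abs_sin_x_le_abs_x[of x]
  by (auto simp: divide_le_eq_1)

lemma borel_measurable_Defs_sinc [measurable]: "Defs.sinc \<in> borel_measurable borel"
  by (simp add: Defs.sinc_def[abs_def])

lemma interval_integral_sinc_mult_cos:
  assumes "0 \<le> R" "0 < a0"
  shows "(LBINT z=0..R. Defs.sinc (a0 * z) * cos (z * s))
    = (sgn (a0 + s) * Si (R * \<bar>a0 + s\<bar>) + sgn (a0 - s) * Si (R * \<bar>a0 - s\<bar>)) / (2 * a0)"
proof -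
  have sum_sines: "Defs.sinc (a0 * t) * cos (t * s) = (sin (t * (a0 + s)) / t + sin (t * (a0 - s)) / t) / (2 * a0)"
    if "t \<noteq> 0" for t
  proof -
    have "sin (t * (a0 + s)) + sin (t * (a0 - s)) = 2 * sin (a0 * t) * cos (t * s)"
      by (simp add: distrib_left right_diff_distrib sin_add sin_diff ac_simps)
    then show ?thesis
      using that assms(2) by (simp add: Defs.sinc_def field_simps add_divide_distrib[symmetric])
  qed
  have "(LBINT z=0..R. Defs.sinc (a0 * z) * cos (z * s))
      = (LBINT t=0..R. (sin (t * (a0 + s)) / t + sin (t * (a0 - s)) / t) / (2 * a0))"
    by (rule interval_integral_discrete_difference[of "{0}"]) (auto simp: sum_sines)
  also have "\<dots> = ((LBINT t=0..R. sin (t * (a0 + s)) / t) + (LBINT t=0..R. sin (t * (a0 - s)) / t)) / (2 * a0)"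
    by (subst interval_lebesgue_integral_divide, subst interval_lebesgue_integral_add(2))
       (auto intro: integrable_sinc'[unfolded zero_ereal_def[symmetric]])
  also have "\<dots> = (sgn (a0 + s) * Si (R * \<bar>a0 + s\<bar>) + sgn (a0 - s) * Si (R * \<bar>a0 - s\<bar>)) / (2 * a0)"
    using LBINT_I0c_sin_scale_divide[OF assms(1)] by simp
  finally show ?thesis .
qed

text \<open>The value of \<open>\<integral>\<^sub>0\<^sup>\<infinity> sinc(a\<^sub>0z) cos(sz) dz\<close>.\<close>

definition sinc_cos_integral :: "real \<Rightarrow> real \<Rightarrow> real" where
  "sinc_cos_integral a0 s = pi * (sgn (a0 + s) + sgn (a0 - s)) / (4 * a0)"

lemma borel_measurable_sinc_cos_integral [measurable]:
  "sinc_cos_integral a0 \<in> borel_measurable borel"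
  unfolding sinc_cos_integral_def by measurable

lemma tendsto_sgn_mult_Si: "((\<lambda>R. sgn \<theta> * Si (R * \<bar>\<theta>\<bar>)) \<longlongrightarrow> sgn \<theta> * (pi / 2)) at_top"
proof (cases "\<theta> = 0")
  case False
  then have "filterlim (\<lambda>R. R * \<bar>\<theta>\<bar>) at_top at_top"
    by (intro filterlim_at_top_mult_tendsto_pos[OF tendsto_const _ filterlim_ident]) auto
  then show ?thesis
    by (intro tendsto_intros filterlim_compose[OF Si_at_top])
qed simp

lemma tendsto_interval_integral_sinc_mult_cos:
  assumes "0 < a0"
  shows "((\<lambda>R::real. LBINT z=0..R. Defs.sinc (a0 * z) * cos (z * s)) \<longlongrightarrow> sinc_cos_integral a0 s) at_top"
proof -
  have "((\<lambda>R. (sgn (a0 + s) * Si (R * \<bar>a0 + s\<bar>) + sgn (a0 - s) * Si (R * \<bar>a0 - s\<bar>)) / (2 * a0))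
      \<longlongrightarrow> (sgn (a0 + s) * (pi / 2) + sgn (a0 - s) * (pi / 2)) / (2 * a0)) at_top"
    by (intro tendsto_divide tendsto_add tendsto_sgn_mult_Si tendsto_const) (use assms in simp)
  moreover have "\<forall>\<^sub>F R in at_top. (sgn (a0 + s) * Si (R * \<bar>a0 + s\<bar>) + sgn (a0 - s) * Si (R * \<bar>a0 - s\<bar>)) / (2 * a0)
      = (LBINT z=0..R. Defs.sinc (a0 * z) * cos (z * s))"
    using eventually_ge_at_top[of 0]
    by eventually_elim (simp add: interval_integral_sinc_mult_cos assms)
  ultimately have "((\<lambda>R::real. LBINT z=0..R. Defs.sinc (a0 * z) * cos (z * s))
      \<longlongrightarrow> (sgn (a0 + s) * (pi / 2) + sgn (a0 - s) * (pi / 2)) / (2 * a0)) at_top"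
    by (rule Lim_transform_eventually)
  moreover have "(sgn (a0 + s) * (pi / 2) + sgn (a0 - s) * (pi / 2)) / (2 * a0) = sinc_cos_integral a0 s"
    by (simp add: sinc_cos_integral_def field_simps)
  ultimately show ?thesis
    by simp
qed

lemma interval_integral_sinc_mult_cos_bounded:
  assumes "0 < a0"
  obtains B where "\<And>R s. 0 \<le> (R::real) \<Longrightarrow> \<bar>LBINT z=0..R. Defs.sinc (a0 * z) * cos (z * s)\<bar> \<le> B"
proof -
  obtain B where B: "\<And>T. \<bar>Si T\<bar> \<le> B"
    using bounded_Si by blast
  have sgn_Si: "\<bar>sgn \<theta> * Si T\<bar> \<le> B" for \<theta> T
    using B[of T] B[of 0] by (cases "\<theta> = 0") (auto simp: abs_mult abs_sgn_eq)
  have "\<bar>LBINT z=0..R. Defs.sinc (a0 * z) * cos (z * s)\<bar> \<le> (B + B) / (2 * a0)" if "0 \<le> R" for R s :: real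
  proof -
    have "\<bar>sgn (a0 + s) * Si (R * \<bar>a0 + s\<bar>) + sgn (a0 - s) * Si (R * \<bar>a0 - s\<bar>)\<bar> \<le> B + B"
      by (rule abs_triangle_ineq[THEN order_trans]) (intro add_mono sgn_Si)
    then have "\<bar>sgn (a0 + s) * Si (R * \<bar>a0 + s\<bar>) + sgn (a0 - s) * Si (R * \<bar>a0 - s\<bar>)\<bar> / (2 * a0)
        \<le> (B + B) / (2 * a0)"
      by (rule divide_right_mono) (use assms in simp)
    then show ?thesis
      using assms by (simp add: interval_integral_sinc_mult_cos[OF that assms])
  qed
  then show ?thesis by (rule that)
qed

lemma interval_integral_mult_integral_cos:
  fixes f :: "real \<Rightarrow> real" and R :: real
  assumes "prob_space M" and [measurable_cong]: "sets M = sets borel"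
    and [measurable]: "f \<in> borel_measurable borel"
    and "\<And>z. \<bar>f z\<bar> \<le> 1" "0 \<le> R"
  shows "(LBINT z=0..R. f z * (\<integral>s. cos (z * s) \<partial>M)) = (\<integral>s. (LBINT z=0..R. f z * cos (z * s)) \<partial>M)"
proof -
  interpret M: prob_space M by fact
  interpret pair_sigma_finite lborel M ..
  have space_M: "space M = UNIV"
    using sets_eq_imp_space_eq[OF \<open>sets M = sets borel\<close>] by simp
  have Icc: "(LBINT z=0..R. g z) = (\<integral>z. indicator {0..R} z * g z \<partial>lborel)" for g :: "real \<Rightarrow> real"
    using interval_integral_Icc[of 0 R g] \<open>0 \<le> R\<close> by (simp add: zero_ereal_def set_lebesgue_integral_def)
  let ?g = "\<lambda>z s. indicator {0..R} z * (f z * cos (z * s)) :: real"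
  have "integrable (lborel \<Otimes>\<^sub>M M) (case_prod ?g)"
  proof (rule integrableI_bounded_set[where A="{0..R} \<times> UNIV" and B=1])
    show "emeasure (lborel \<Otimes>\<^sub>M M) ({0..R} \<times> UNIV) < \<infinity>"
      using M.emeasure_pair_measure_Times[of "{0..R}" lborel UNIV] \<open>0 \<le> R\<close>
      by (simp add: M.emeasure_space_1[unfolded space_M])
    show "AE x in lborel \<Otimes>\<^sub>M M. x \<in> {0..R} \<times> UNIV \<longrightarrow> norm (case_prod ?g x) \<le> 1"
      using \<open>\<And>z. \<bar>f z\<bar> \<le> 1\<close> abs_cos_le_one
      by (intro AE_I2) (auto simp: abs_mult intro!: mult_le_one split: split_indicator)
    show "AE x in lborel \<Otimes>\<^sub>M M. x \<notin> {0..R} \<times> UNIV \<longrightarrow> case_prod ?g x = 0"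
      by (intro AE_I2) (auto split: split_indicator prod.splits)
  qed auto
  then have "(\<integral>z. (\<integral>s. ?g z s \<partial>M) \<partial>lborel) = (\<integral>s. (\<integral>z. ?g z s \<partial>lborel) \<partial>M)"
    by (rule Fubini_integral[symmetric])
  then show ?thesis
    by (simp add: Icc mult.assoc)
qed

lemma tendsto_interval_integral_sinc_mult_charfun:
  assumes "prob_space M" and [measurable_cong]: "sets M = sets borel" and "0 < a0"
  shows "((\<lambda>R::real. LBINT z=0..R. Defs.sinc (a0 * z) * (\<integral>s. cos (z * s) \<partial>M))
           \<longlongrightarrow> (\<integral>s. sinc_cos_integral a0 s \<partial>M)) at_top"
proof -
  obtain B where B: "\<And>R s. 0 \<le> (R::real) \<Longrightarrow> \<bar>LBINT z=0..R. Defs.sinc (a0 * z) * cos (z * s)\<bar> \<le> B"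
    using interval_integral_sinc_mult_cos_bounded[OF \<open>0 < a0\<close>] by blast
  have "((\<lambda>R::real. \<integral>s. (LBINT z=0..R. Defs.sinc (a0 * z) * cos (z * s)) \<partial>M)
           \<longlongrightarrow> (\<integral>s. sinc_cos_integral a0 s \<partial>M)) at_top"
  proof (rule integral_dominated_convergence_at_top[where w="\<lambda>_. B"])
    show "\<forall>\<^sub>F R in at_top. AE s in M. norm (LBINT z=0..(R::real). Defs.sinc (a0 * z) * cos (z * s)) \<le> B"
      by (rule eventually_at_top_linorderI[of 0]) (auto intro: B)
    show "AE s in M. ((\<lambda>R::real. LBINT z=0..R. Defs.sinc (a0 * z) * cos (z * s)) \<longlongrightarrow> sinc_cos_integral a0 s) at_top"
      using tendsto_interval_integral_sinc_mult_cos[OF \<open>0 < a0\<close>] by simp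
    show "(\<lambda>s. LBINT z=0..R. Defs.sinc (a0 * z) * cos (z * s)) \<in> borel_measurable M" for R :: real
      unfolding interval_lebesgue_integral_def set_lebesgue_integral_def by measurable
  qed (use \<open>prob_space M\<close> finite_measure.integrable_const prob_space_def in auto)
  moreover have "\<forall>\<^sub>F R in at_top. (\<integral>s. (LBINT z=0..(R::real). Defs.sinc (a0 * z) * cos (z * s)) \<partial>M)
      = (LBINT z=0..R. Defs.sinc (a0 * z) * (\<integral>s. cos (z * s) \<partial>M))"
    using eventually_ge_at_top[of "0::real"]
    by eventually_elim (simp add: interval_integral_mult_integral_cos assms abs_sinc_le_1)
  ultimately show ?thesis
    by (rule Lim_transform_eventually)
qed

lemma integral_sinc_cos_integral_eq:
  assumes "prob_space M" and [measurable_cong]: "sets M = sets borel"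
    and "AE s in M. \<bar>s\<bar> \<le> S" "S < a0"
  shows "(\<integral>s. sinc_cos_integral a0 s \<partial>M) = pi / (2 * a0)"
proof -
  have "(\<integral>s. sinc_cos_integral a0 s \<partial>M) = (\<integral>s. pi / (2 * a0) \<partial>M)"
  proof (rule integral_cong_AE)
    show "AE s in M. sinc_cos_integral a0 s = pi / (2 * a0)"
      using assms(3) by eventually_elim (use \<open>S < a0\<close> in \<open>auto simp: sinc_cos_integral_def\<close>)
  qed auto
  also have "\<dots> = pi / (2 * a0)"
    using \<open>prob_space M\<close> by (simp add: prob_space.prob_space)
  finally show ?thesis .
qed

lemma abs_sinc_cos_integral_le:
  assumes "0 < a0"
  shows "\<bar>sinc_cos_integral a0 s\<bar> \<le> pi / (2 * a0)"
proof -
  have "\<bar>sgn (a0 + s) + sgn (a0 - s)\<bar> \<le> 2"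
    by (simp add: sgn_real_def)
  then have "pi * \<bar>sgn (a0 + s) + sgn (a0 - s)\<bar> / (4 * a0) \<le> pi * 2 / (4 * a0)"
    using assms by (intro divide_right_mono mult_left_mono) auto
  then show ?thesis
    using assms by (simp add: sinc_cos_integral_def abs_mult)
qed

lemma sinc_cos_integral_eq_0: "a0 < s \<Longrightarrow> 0 < a0 \<Longrightarrow> sinc_cos_integral a0 s = 0"
  by (simp add: sinc_cos_integral_def)

lemma integral_sinc_cos_integral_less:
  assumes "prob_space M" and [measurable_cong]: "sets M = sets borel"
    and "0 < a0" "emeasure M {a0<..} > 0"
  shows "(\<integral>s. sinc_cos_integral a0 s \<partial>M) < pi / (2 * a0)"
proof -
  interpret M: prob_space M by fact
  let ?c = "pi / (2 * a0)"
  have [simp]: "integrable M (indicator {a0<..} :: real \<Rightarrow> real)"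
    by (rule M.integrable_const_bound[where B=1]) (auto split: split_indicator)
  have "sinc_cos_integral a0 s \<le> ?c - ?c * indicator {a0<..} s" for s
    using abs_sinc_cos_integral_le[OF \<open>0 < a0\<close>, of s] sinc_cos_integral_eq_0[OF _ \<open>0 < a0\<close>, of s]
    by (auto split: split_indicator)
  then have "(\<integral>s. sinc_cos_integral a0 s \<partial>M) \<le> (\<integral>s. ?c - ?c * indicator {a0<..} s \<partial>M)"
    using M.integrable_const_bound[where B="?c" and f="sinc_cos_integral a0"]
    by (intro integral_mono) (auto intro: abs_sinc_cos_integral_le[OF \<open>0 < a0\<close>])
  also have "\<dots> = ?c - ?c * measure M {a0<..}"
    by (simp add: M.prob_space)
  also have "\<dots> < ?c"
    using assms(4) \<open>0 < a0\<close> by (simp add: M.emeasure_eq_measure)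
  finally show ?thesis .
qed

theorem mainTheorem11:
  fixes n :: nat and a0 :: real and a :: "nat \<Rightarrow> real" and \<psi> :: "nat \<Rightarrow> real \<Rightarrow> real"
  assumes "n \<ge> 1" and "a0 > 0" and "\<forall>k\<in>{1..n}. a k > 0"
    and "\<forall>k\<in>{1..n}. admissible_density (\<psi> k)"
  shows "(a0 > (\<Sum>k\<in>{1..n}. a k) \<longrightarrow>
            (partial_int a0 a \<psi> n \<longlongrightarrow> pi / (2 * a0)) at_top)
       \<and> (a0 < (\<Sum>k\<in>{1..n}. a k) \<longrightarrow>
            (\<exists>I. (partial_int a0 a \<psi> n \<longlongrightarrow> I) at_top \<and> I < pi / (2 * a0)))"
proof -
  let ?\<mu> = "weighted_sum_law a \<psi> n"
  have \<mu>: "prob_space ?\<mu>"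
    using assms(4) by (intro prob_space_weighted_sum_law) (auto simp: admissible_density_def)
  have "partial_int a0 a \<psi> n = (\<lambda>R. LBINT z=0..R. Defs.sinc (a0 * z) * (\<integral>s. cos (z * s) \<partial>?\<mu>))"
    using prod_charfun_dens_eq_integral_cos[OF assms(4)] by (simp add: partial_int_def fun_eq_iff)
  then have lim: "(partial_int a0 a \<psi> n \<longlongrightarrow> (\<integral>s. sinc_cos_integral a0 s \<partial>?\<mu>)) at_top"
    using tendsto_interval_integral_sinc_mult_charfun[OF \<mu> _ assms(2)] by simp
  show ?thesis
  proof (intro conjI impI)
    assume "a0 > (\<Sum>k\<in>{1..n}. a k)"
    then show "(partial_int a0 a \<psi> n \<longlongrightarrow> pi / (2 * a0)) at_top"
      using lim integral_sinc_cos_integral_eq[OF \<mu> _ AE_abs_le_weighted_sum_law[OF assms(4,3)]] by simp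
  next
    assume "a0 < (\<Sum>k\<in>{1..n}. a k)"
    then have "(\<integral>s. sinc_cos_integral a0 s \<partial>?\<mu>) < pi / (2 * a0)"
      using assms(2-4) by (intro integral_sinc_cos_integral_less \<mu> emeasure_weighted_sum_law_greaterThan_pos) auto
    with lim show "\<exists>I. (partial_int a0 a \<psi> n \<longlongrightarrow> I) at_top \<and> I < pi / (2 * a0)"
      by blast
  qed
qed

end
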